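(* Let $v$ be an indeterminate and $q=v^2$. For all integers $m,n\in\mathbb{Z}$, the following identity holds in $\mathbb{Q}(v)((x))$: \[ \sigma_m^0\,\sigma_n^0=\sum_{i=0}^{\infty}\gamma_{m,n}^{i}\,\sigma_{m+n-i}^0, \qquad\text{where}\qquad \gamma_{m,n}^{i}=\{m\}_i\,\{n\}_i\,\begin{bmatrix} m+n+1\\ i\end{bmatrix}. \] (The infinite sum converges $x$-adically.)
   Context: Notation: for $n\in\mathbb{Z}$ and $i\in\mathbb{Z}_{\ge0}$, $\{n\}=v^n-v^{-n}$, $\{n\}_i=\{n\}\{n-1\}\cdots\{n-i+1\}$ (with $\{n\}_0=1$), $[n]=\frac{v^n-v^{-n}}{v-v^{-1}}$, $[i]!=[i][i-1]\cdots[1]$, and $\begin{bmatrix} n\\ i\end{bmatrix}=\frac{[n][n-1]\cdots[n-i+1]}{[i]!}$ (defined also for negative $n$). For $n\in\mathbb{Z}$ define the rational function $\sigma_n\in\mathbb{Q}(x,q)$ by $\sigma_n=\prod_{i=1}^{n}(x+x^{-1}-q^i-q^{-i})$ if $n\ge 0$ and $\sigma_n=\prod_{i=0}^{-n-1}(x+x^{-1}-q^i-q^{-i})^{-1}$ if $n<0$. Let $\sigma_n^0\in\mathbb{Z}[q^{\pm1}]((x))$ denote the Laurent expansion of $\sigma_n$ at $x=0$ (for $n<0$ this is a power series divisible by $x^{-n}$). *)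

theory Defs
  imports "HOL-Computational_Algebra.Formal_Laurent_Series"
          "HOL-Computational_Algebra.Fraction_Field"
begin

type_synonym Qv = "rat poly fract"

definition vv :: Qv where "vv = Fract [:0, 1:] 1"

definition qq :: Qv where "qq = vv ^ 2"

definition qbr :: "int \<Rightarrow> Qv" where
  "qbr n = vv powi n - vv powi (-n)"

definition qbr_fall :: "int \<Rightarrow> nat \<Rightarrow> Qv" where
  "qbr_fall n i = (\<Prod>j<i. qbr (n - int j))"

definition qint :: "int \<Rightarrow> Qv" where
  "qint n = (vv powi n - vv powi (-n)) / (vv - inverse vv)"

definition qfact :: "nat \<Rightarrow> Qv" where
  "qfact i = (\<Prod>j\<in>{1..i}. qint (int j))"

definition qbinom :: "int \<Rightarrow> nat \<Rightarrow> Qv" where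
  "qbinom n i = (\<Prod>j<i. qint (n - int j)) / qfact i"

definition sfac :: "nat \<Rightarrow> Qv fls" where
  "sfac i = fls_X + fls_X_inv - fls_const (qq ^ i + inverse (qq ^ i))"

text \<open>sigma_n^0: Laurent expansion at x = 0 of sigma_n (for n < 0 the inverse
  is taken in the field of formal Laurent series, which is exactly the expansion at 0).\<close>
definition sigma0 :: "int \<Rightarrow> Qv fls" where
  "sigma0 n = (if 0 \<le> n then (\<Prod>i\<in>{1..nat n}. sfac i)
               else inverse (\<Prod>i\<in>{0..<nat (-n)}. sfac i))"

definition gamma :: "int \<Rightarrow> int \<Rightarrow> nat \<Rightarrow> Qv" where
  "gamma m n i = qbr_fall m i * qbr_fall n i * qbinom (m + n + 1) i"

end

theory Submission
  imports Defs
begin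

text \<open>Write \<open>s\<^sub>k = x + x\<^sup>-\<^sup>1 - q\<^sup>k - q\<^sup>-\<^sup>k\<close>. Then
  \<open>\<sigma>\<^sub>k = s\<^bsub>|k|\<^esub> \<sigma>\<^bsub>k-1\<^esub>\<close> for every integer \<open>k\<close>, so \<open>\<sigma>\<^sub>k\<close> has \<open>x\<close>-adic order \<open>-k\<close>,
  and \<open>s\<^bsub>n+1\<^esub> - s\<^bsub>m+n+1-i\<^esub>\<close> is the constant \<open>{m+2n+2-i}{m-i}\<close>.
  Multiplying the \<open>N\<close>-th partial sum of the expansion of \<open>\<sigma>\<^sub>m \<sigma>\<^sub>n\<close> by \<open>s\<^bsub>n+1\<^esub>\<close>
  therefore gives the partial sum for \<open>(m, n+1)\<close> up to one boundary term of order
  \<open>N - m - n - 1\<close>; this is where the three-term identity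
  \<open>{A}{B} = {A-J}{B-J} + {J}{A+B-J}\<close> enters, through the recurrence of \<open>\<gamma>\<close> in \<open>n\<close>.
  For \<open>n = 0\<close> the partial sums are eventually exactly \<open>\<sigma>\<^sub>m\<close>. Induction on \<open>n\<close> in both
  directions (dividing by \<open>s\<^bsub>n+1\<^esub>\<close>, of order \<open>-1\<close>, on the way down) shows that the
  \<open>N\<close>-th remainder vanishes below \<open>x\<^bsup>N-m-n\<^esup>\<close>, which is \<open>x\<close>-adic convergence.\<close>

unbundle fps_syntax

definition fls_vanishes_below :: "int \<Rightarrow> 'a::zero fls \<Rightarrow> bool" where
  "fls_vanishes_below d f \<longleftrightarrow> (\<forall>j<d. f $$ j = 0)"

lemma fls_vanishes_below_subdegree: "fls_vanishes_below (fls_subdegree f) f"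
  by (simp add: fls_vanishes_below_def)

lemma fls_vanishes_below_mono:
  "fls_vanishes_below d f \<Longrightarrow> e \<le> d \<Longrightarrow> fls_vanishes_below e f"
  by (simp add: fls_vanishes_below_def)

lemma fls_vanishes_below_zero [simp]: "fls_vanishes_below d 0"
  by (simp add: fls_vanishes_below_def)

lemma fls_vanishes_below_subdegree_ge:
  "fls_vanishes_below d f \<Longrightarrow> f \<noteq> 0 \<Longrightarrow> d \<le> fls_subdegree f"
  unfolding fls_vanishes_below_def by (rule fls_subdegree_geI) auto

lemma fls_vanishes_below_add:
  fixes f g :: "'a::monoid_add fls"
  shows "fls_vanishes_below d f \<Longrightarrow> fls_vanishes_below d g \<Longrightarrow> fls_vanishes_below d (f + g)"
  by (simp add: fls_vanishes_below_def)

lemma fls_vanishes_below_uminus [simp]: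
  fixes f :: "'a::group_add fls"
  shows "fls_vanishes_below d (- f) \<longleftrightarrow> fls_vanishes_below d f"
  by (simp add: fls_vanishes_below_def)

lemma fls_vanishes_below_diff:
  fixes f g :: "'a::group_add fls"
  shows "fls_vanishes_below d f \<Longrightarrow> fls_vanishes_below d g \<Longrightarrow> fls_vanishes_below d (f - g)"
  by (simp add: fls_vanishes_below_def)

lemma fls_vanishes_below_mult:
  fixes f g :: "'a::ring_no_zero_divisors fls"
  assumes "fls_vanishes_below d f" "fls_vanishes_below e g"
  shows "fls_vanishes_below (d + e) (f * g)"
proof (cases "f = 0 \<or> g = 0")
  case False
  then have "d + e \<le> fls_subdegree (f * g)"
    using assms by (simp add: fls_vanishes_below_subdegree_ge add_mono)
  then show ?thesis
    unfolding fls_vanishes_below_def by simp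
qed auto

lemma fls_vanishes_below_const_mult:
  fixes f :: "'a::ring_no_zero_divisors fls"
  shows "fls_vanishes_below d f \<Longrightarrow> fls_vanishes_below d (fls_const c * f)"
  using fls_vanishes_below_mult[of 0 "fls_const c" d f] fls_vanishes_below_subdegree[of "fls_const c"]
  by simp

lemma fls_vanishes_below_mult_left:
  fixes f g :: "'a::ring_no_zero_divisors fls"
  shows "fls_vanishes_below d f \<Longrightarrow> fls_vanishes_below (fls_subdegree g + d) (g * f)"
  using fls_vanishes_below_mult[OF fls_vanishes_below_subdegree] .

lemma fls_vanishes_below_mult_cancel:
  fixes f g :: "'a::ring_no_zero_divisors fls"
  assumes "g \<noteq> 0" "fls_vanishes_below d (g * f)"
  shows "fls_vanishes_below (d - fls_subdegree g) f"
proof (cases "f = 0")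
  case False
  then have "d \<le> fls_subdegree g + fls_subdegree f"
    using assms fls_vanishes_below_subdegree_ge[of d "g * f"] by simp
  then show ?thesis
    unfolding fls_vanishes_below_def by simp
qed simp

lemma tendsto_fls_if_vanishes_below:
  fixes f :: "'b \<Rightarrow> 'a::group_add fls"
  assumes "\<And>d. eventually (\<lambda>x. fls_vanishes_below d (f x - L)) F"
  shows "(f \<longlongrightarrow> L) F"
  unfolding tendsto_iff
proof (intro allI impI)
  fix e :: real
  assume "e > 0"
  then obtain n :: nat where n: "(1/2) ^ n < e"
    using real_arch_pow_inv[of e "1/2"] by auto
  show "eventually (\<lambda>x. dist (f x) L < e) F"
    using assms[of "int n"]
  proof eventually_elim
    case (elim x)
    show ?case
    proof (cases "f x = L")
      case False
      then have deg: "int n \<le> fls_subdegree (f x - L)"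
        using elim by (simp add: fls_vanishes_below_subdegree_ge)
      then have "dist (f x) L = inverse (2 ^ nat (fls_subdegree (f x - L)))"
        using False by (simp add: dist_fls_def)
      also have "\<dots> \<le> inverse (2 ^ n)"
        using deg by (intro le_imp_inverse_le power_increasing) auto
      also have "\<dots> < e"
        using n by (simp add: power_one_over inverse_eq_divide)
      finally show ?thesis .
    qed (use \<open>e > 0\<close> in simp)
  qed
qed

lemma power_int_antisym_mult_shift:
  fixes w :: "'a::field"
  assumes "w \<noteq> 0"
  shows "(w powi A - w powi (-A)) * (w powi B - w powi (-B)) =
         (w powi (A-J) - w powi (-(A-J))) * (w powi (B-J) - w powi (-(B-J))) +
         (w powi J - w powi (-J)) * (w powi (A+B-J) - w powi (-(A+B-J)))"
  using assms
  by (simp add: power_int_diff power_int_add power_int_minus field_simps)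

lemma power_int_sym_diff:
  fixes w :: "'a::field"
  assumes "w \<noteq> 0"
  shows "(w powi (2*l) + w powi (-(2*l))) - (w powi (2*k) + w powi (-(2*k))) =
         (w powi (l+k) - w powi (-(l+k))) * (w powi (l-k) - w powi (-(l-k)))"
proof -
  have double: "w powi (2*z) = (w powi z)\<^sup>2" for z
    by (simp add: mult.commute[of 2] power_int_mult)
  show ?thesis
    unfolding power_int_minus double using assms
    by (simp add: power_int_diff power_int_add power_int_minus field_simps power2_eq_square)
qed

lemma vv_power: "vv ^ k = Fract (monom 1 k) 1"
  by (induction k) (simp_all add: vv_def One_fract_def monom_altdef one_pCons)

lemma vv_nonzero: "vv \<noteq> 0"
  by (simp add: vv_def Zero_fract_def eq_fract)

lemma vv_power_eq_1_iff: "vv ^ k = 1 \<longleftrightarrow> k = 0"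
  by (auto simp: vv_power One_fract_def eq_fract monom_eq_1_iff)

lemma qbr_uminus: "qbr (-k) = - qbr k"
  by (simp add: qbr_def)

lemma qbr_nonzero:
  assumes "k \<noteq> 0"
  shows "qbr k \<noteq> 0"
proof -
  have pos: "qbr k \<noteq> 0" if "k > 0" for k
  proof
    assume "qbr k = 0"
    then have "vv powi k * vv powi k = 1"
      using vv_nonzero by (simp add: qbr_def power_int_minus field_simps)
    then have "vv ^ (2 * nat k) = 1"
      using that by (simp add: power_int_def power_add[symmetric] mult_2)
    with that show False
      by (simp add: vv_power_eq_1_iff)
  qed
  show ?thesis
    using pos[of k] pos[of "-k"] assms by (cases "k > 0") (auto simp: qbr_uminus)
qed

lemma qbr_mult_qbr: "qbr A * qbr B = qbr (A - J) * qbr (B - J) + qbr J * qbr (A + B - J)"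
  unfolding qbr_def using power_int_antisym_mult_shift[OF vv_nonzero] .

lemma qint_eq_qbr_divide: "qint k = qbr k / qbr 1"
  by (simp add: qint_def qbr_def power_int_minus)

lemma qbr_fall_Suc: "qbr_fall n (Suc j) = qbr_fall n j * qbr (n - int j)"
  by (simp add: qbr_fall_def)

lemma qbr_fall_Suc_shift: "qbr_fall (n + 1) (Suc j) = qbr (n + 1) * qbr_fall n j"
  unfolding qbr_fall_def prod.lessThan_Suc_shift by (simp add: algebra_simps)

lemma qbr_fall_nonzero: "int j \<le> n \<Longrightarrow> qbr_fall n j \<noteq> 0"
  by (auto simp: qbr_fall_def qbr_nonzero)

lemma qfact_eq_qbr_fall: "qfact i = qbr_fall (int i) i / qbr 1 ^ i"
proof (induction i)
  case (Suc i)
  have "qfact (Suc i) = qfact i * qint (int i + 1)"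
    by (simp add: qfact_def add.commute)
  also have "\<dots> = qbr_fall (int i + 1) (Suc i) / qbr 1 ^ Suc i"
    by (simp add: Suc qbr_fall_Suc_shift qint_eq_qbr_divide mult_ac)
  finally show ?case
    by (simp add: add.commute)
qed (simp add: qfact_def qbr_fall_def)

lemma gamma_eq_qbr_fall:
  "gamma m n i = qbr_fall m i * qbr_fall n i * qbr_fall (m + n + 1) i / qbr_fall (int i) i"
proof -
  have "(\<Prod>j<i. qint (k - int j)) = qbr_fall k i / qbr 1 ^ i" for k
    by (simp add: qbr_fall_def qint_eq_qbr_divide prod_dividef)
  then show ?thesis
    using qbr_nonzero[of 1]
    by (simp add: gamma_def qbinom_def qfact_eq_qbr_fall)
qed

lemma gamma_0 [simp]: "gamma m n 0 = 1"
  by (simp add: gamma_def qbr_fall_def qbinom_def qfact_def)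

lemma gamma_0_right_Suc [simp]: "gamma m 0 (Suc i) = 0"
proof -
  have "qbr_fall 0 (Suc i) = 0"
    unfolding qbr_fall_def prod.lessThan_Suc_shift by (simp add: qbr_def)
  then show ?thesis
    by (simp add: gamma_def)
qed

lemma gamma_Suc_right:
  "gamma m (n + 1) (Suc j) =
     gamma m n (Suc j) + gamma m n j * qbr (m + 2 * n + 2 - int j) * qbr (m - int j)"
proof -
  define C where "C = qbr_fall m j * qbr_fall n j * qbr_fall (m + n + 1) j * qbr (m - int j) /
    (qbr_fall (int j) j * qbr (int j + 1))"
  have nonzero: "qbr_fall (int j) j \<noteq> 0" "qbr (int j + 1) \<noteq> 0"
    by (simp_all add: qbr_fall_nonzero qbr_nonzero)
  have fall_Suc: "qbr_fall (int (Suc j)) (Suc j) = qbr (int j + 1) * qbr_fall (int j) j"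
    using qbr_fall_Suc_shift[of "int j" j] by (simp add: add.commute)
  have fall_Suc_n: "qbr_fall (n + 1) (Suc j) = qbr (n + 1) * qbr_fall n j"
    by (rule qbr_fall_Suc_shift)
  have fall_Suc_mn: "qbr_fall (m + (n + 1) + 1) (Suc j) = qbr (m + n + 2) * qbr_fall (m + n + 1) j"
    using qbr_fall_Suc_shift[of "m + n + 1" j] by (simp add: add.assoc)
  have "gamma m (n + 1) (Suc j) = C * (qbr (n + 1) * qbr (m + n + 2))"
    unfolding gamma_eq_qbr_fall qbr_fall_Suc[of m] fall_Suc fall_Suc_n fall_Suc_mn C_def
    by (simp add: mult_ac)
  also have "qbr (n + 1) * qbr (m + n + 2) =
      qbr (n - int j) * qbr (m + n + 1 - int j) + qbr (int j + 1) * qbr (m + 2 * n + 2 - int j)"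
    using qbr_mult_qbr[of "n + 1" "m + n + 2" "int j + 1"] by (simp add: algebra_simps)
  also have "C * \<dots> = gamma m n (Suc j) + gamma m n j * qbr (m + 2 * n + 2 - int j) * qbr (m - int j)"
    unfolding gamma_eq_qbr_fall qbr_fall_Suc[of m] qbr_fall_Suc[of n] qbr_fall_Suc[of "m + n + 1"]
      fall_Suc C_def using nonzero
    by (simp add: field_simps)
  finally show ?thesis .
qed

lemma sfac_nat_abs:
  "sfac (nat \<bar>k\<bar>) = fls_X + fls_X_inv - fls_const (vv powi (2 * k) + vv powi (-(2 * k)))"
proof -
  have "qq ^ nat \<bar>k\<bar> + inverse (qq ^ nat \<bar>k\<bar>) = vv powi (2 * k) + vv powi (-(2 * k))"
    by (cases "k \<ge> 0")
      (auto simp: qq_def power_int_def power_mult[symmetric] power_inverse nat_mult_distrib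
        simp flip: mult_minus_right)
  then show ?thesis
    by (simp add: sfac_def)
qed

lemma sfac_diff: "sfac (nat \<bar>k\<bar>) - sfac (nat \<bar>l\<bar>) = fls_const (qbr (l + k) * qbr (l - k))"
  using power_int_sym_diff[OF vv_nonzero, of l k]
  by (simp add: sfac_nat_abs qbr_def fls_minus_const)

lemma sfac_nonzero: "sfac i \<noteq> 0"
  by (rule fls_nonzeroI[of _ "-1"]) (simp add: sfac_def)

lemma sfac_subdegree: "fls_subdegree (sfac i) = -1"
  by (rule fls_subdegree_eqI) (auto simp: sfac_def)

lemma sigma0_recurrence: "sigma0 k = sfac (nat \<bar>k\<bar>) * sigma0 (k - 1)"
proof (cases "k \<ge> 1")
  case True
  define r where "r = nat (k - 1)"
  have "nat k = Suc r" "nat \<bar>k\<bar> = Suc r"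
    using True by (simp_all add: r_def)
  with True show ?thesis
    by (simp add: sigma0_def r_def mult.commute)
next
  case False
  define r where "r = nat (-k)"
  have "nat (-(k - 1)) = Suc r" "nat \<bar>k\<bar> = r"
    using False by (simp_all add: r_def)
  moreover have "sigma0 k = inverse (\<Prod>i\<in>{0..<r}. sfac i)"
    using False by (cases "k = 0") (auto simp: sigma0_def r_def)
  ultimately show ?thesis
    using False sfac_nonzero[of r] by (simp add: sigma0_def)
qed

lemma sigma0_vanishes_below: "fls_vanishes_below (-k) (sigma0 k)"
proof (induction k rule: int_induct[where k = 0])
  case base
  show ?case
    using fls_vanishes_below_subdegree[of "1 :: Qv fls"] by (simp add: sigma0_def)
next
  case (step1 k)
  have "fls_vanishes_below (fls_subdegree (sfac (nat \<bar>k + 1\<bar>)) + -k) (sigma0 (k + 1))"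
    unfolding sigma0_recurrence[of "k + 1"] using fls_vanishes_below_mult_left[OF step1(2)] by simp
  then show ?case
    by (rule fls_vanishes_below_mono) (simp add: sfac_subdegree)
next
  case (step2 k)
  have "fls_vanishes_below (-k) (sfac (nat \<bar>k\<bar>) * sigma0 (k - 1))"
    using step2(2) by (simp flip: sigma0_recurrence)
  then have "fls_vanishes_below (-k - fls_subdegree (sfac (nat \<bar>k\<bar>))) (sigma0 (k - 1))"
    by (rule fls_vanishes_below_mult_cancel[OF sfac_nonzero])
  then show ?case
    by (rule fls_vanishes_below_mono) (simp add: sfac_subdegree)
qed

definition expansion_term :: "int \<Rightarrow> int \<Rightarrow> nat \<Rightarrow> Qv fls" where
  "expansion_term m n i = fls_const (gamma m n i) * sigma0 (m + n - int i)"

definition expansion_remainder :: "int \<Rightarrow> int \<Rightarrow> nat \<Rightarrow> Qv fls" where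
  "expansion_remainder m n N = (\<Sum>i<N. expansion_term m n i) - sigma0 m * sigma0 n"

lemma sfac_mult_expansion_term:
  "sfac (nat \<bar>n + 1\<bar>) * expansion_term m n j =
     fls_const (gamma m n j) * sigma0 (m + n + 1 - int j) +
     fls_const (gamma m n j * qbr (m + 2 * n + 2 - int j) * qbr (m - int j)) * sigma0 (m + n - int j)"
proof -
  have "sfac (nat \<bar>n + 1\<bar>) =
      sfac (nat \<bar>m + n + 1 - int j\<bar>) + fls_const (qbr (m + 2 * n + 2 - int j) * qbr (m - int j))"
    using sfac_diff[of "n + 1" "m + n + 1 - int j"] by (simp add: algebra_simps)
  moreover have "sigma0 (m + n + 1 - int j) = sfac (nat \<bar>m + n + 1 - int j\<bar>) * sigma0 (m + n - int j)"
    using sigma0_recurrence[of "m + n + 1 - int j"] by (simp add: algebra_simps)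
  ultimately show ?thesis
    by (simp add: expansion_term_def algebra_simps flip: fls_const_mult_const)
qed

lemma sfac_mult_expansion_partial_sum:
  "sfac (nat \<bar>n + 1\<bar>) * (\<Sum>i<Suc N. expansion_term m n i) =
     (\<Sum>i<Suc N. expansion_term m (n + 1) i) +
     fls_const (gamma m n N * qbr (m + 2 * n + 2 - int N) * qbr (m - int N)) * sigma0 (m + n - int N)"
proof (induction N)
  case 0
  show ?case
    using sfac_mult_expansion_term[of n m 0] by (simp add: expansion_term_def add_ac)
next
  case (Suc N)
  have "expansion_term m (n + 1) (Suc N) =
      fls_const (gamma m n (Suc N)) * sigma0 (m + n + 1 - int (Suc N)) +
      fls_const (gamma m n N * qbr (m + 2 * n + 2 - int N) * qbr (m - int N)) * sigma0 (m + n - int N)"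
    unfolding expansion_term_def gamma_Suc_right by (simp add: algebra_simps flip: fls_plus_const)
  then show ?case
    using Suc sfac_mult_expansion_term[of n m "Suc N"]
    by (simp add: algebra_simps)
qed

lemma expansion_remainder_Suc_right:
  "expansion_remainder m (n + 1) (Suc N) =
     sfac (nat \<bar>n + 1\<bar>) * expansion_remainder m n (Suc N) -
     fls_const (gamma m n N * qbr (m + 2 * n + 2 - int N) * qbr (m - int N)) * sigma0 (m + n - int N)"
  using sfac_mult_expansion_partial_sum[where m = m and n = n and N = N] sigma0_recurrence[of "n + 1"]
  by (simp add: expansion_remainder_def algebra_simps)

lemma expansion_remainder_0_right: "expansion_remainder m 0 (Suc N) = 0"
  unfolding expansion_remainder_def sum.lessThan_Suc_shift
  by (simp add: expansion_term_def sigma0_def)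

lemma expansion_remainder_vanishes_below:
  "fls_vanishes_below (int N - m - n) (expansion_remainder m n N)"
proof (cases N)
  case 0
  then show ?thesis
    using fls_vanishes_below_mult[OF sigma0_vanishes_below sigma0_vanishes_below, of m n]
    by (simp add: expansion_remainder_def)
next
  case (Suc M)
  define boundary where "boundary n =
    fls_const (gamma m n M * qbr (m + 2 * n + 2 - int M) * qbr (m - int M)) * sigma0 (m + n - int M)"
    for n
  have boundary_vanishes: "fls_vanishes_below (int M - m - n) (boundary n)" for n
    using fls_vanishes_below_const_mult[OF sigma0_vanishes_below[of "m + n - int M"]]
    by (simp add: boundary_def diff_diff_eq)
  have remainder_step: "expansion_remainder m (n + 1) N =
      sfac (nat \<bar>n + 1\<bar>) * expansion_remainder m n N - boundary n" for n
    unfolding Suc boundary_def by (rule expansion_remainder_Suc_right)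
  show ?thesis
  proof (induction n rule: int_induct[where k = 0])
    case base
    show ?case
      by (simp add: Suc expansion_remainder_0_right)
  next
    case (step1 n)
    have "fls_vanishes_below (int M - m - n) (sfac (nat \<bar>n + 1\<bar>) * expansion_remainder m n N)"
      by (rule fls_vanishes_below_mono[OF fls_vanishes_below_mult_left[OF step1(2)]])
        (simp add: sfac_subdegree Suc)
    then have "fls_vanishes_below (int M - m - n) (expansion_remainder m (n + 1) N)"
      unfolding remainder_step using boundary_vanishes by (rule fls_vanishes_below_diff)
    then show ?case
      by (rule fls_vanishes_below_mono) (simp add: Suc)
  next
    case (step2 n)
    have "sfac (nat \<bar>n\<bar>) * expansion_remainder m (n - 1) N =
        expansion_remainder m n N + boundary (n - 1)"
      using remainder_step[of "n - 1"] by simp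
    moreover have "fls_vanishes_below (int M - m - (n - 1))
        (expansion_remainder m n N + boundary (n - 1))"
      by (rule fls_vanishes_below_add[OF fls_vanishes_below_mono[OF step2(2)] boundary_vanishes])
        (simp add: Suc)
    ultimately have "fls_vanishes_below (int M - m - (n - 1))
        (sfac (nat \<bar>n\<bar>) * expansion_remainder m (n - 1) N)"
      by simp
    then have "fls_vanishes_below (int M - m - (n - 1) - fls_subdegree (sfac (nat \<bar>n\<bar>)))
        (expansion_remainder m (n - 1) N)"
      by (rule fls_vanishes_below_mult_cancel[OF sfac_nonzero])
    then show ?case
      by (rule fls_vanishes_below_mono) (simp add: sfac_subdegree Suc)
  qed
qed

theorem proposition3p3:
  fixes m n :: int
  shows "(\<lambda>i. fls_const (gamma m n i) * sigma0 (m + n - int i)) sums (sigma0 m * sigma0 n)"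
proof -
  have "eventually (\<lambda>N. fls_vanishes_below d (expansion_remainder m n N)) sequentially" for d
  proof (rule eventually_sequentiallyI)
    fix N
    assume "nat (d + m + n) \<le> N"
    then have "d \<le> int N - m - n"
      by linarith
    with expansion_remainder_vanishes_below show "fls_vanishes_below d (expansion_remainder m n N)"
      by (rule fls_vanishes_below_mono)
  qed
  then show ?thesis
    unfolding sums_def expansion_remainder_def expansion_term_def
    by (rule tendsto_fls_if_vanishes_below)
qed

end
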